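(* For every integer $k\geq1$ and every polynomial $r(x)$, the function $$H(x,y)=\frac{\big[(1-r(x)^2)^{2k}+2k\,r(x)(1-r(x)^2)^k y+k y^2\big]^{2k-1}}{\big[(1-r(x)^2)^{2k-1}+(2k-1)\,r(x)(1-r(x)^2)^{k-1}y+\tfrac{2k-1}{2}y^2\big]^{2k}}$$ is a first integral of a Li\'enard type equation of the form $$\frac{dx}{dt}=-y+r_2(x),\qquad \frac{dy}{dt}=y\,r_4(x)$$ for suitable polynomials $r_2,r_4$. *)

theory Defs
  imports "HOL-Analysis.Analysis" "HOL-Computational_Algebra.Polynomial"
begin

definition first_integral ::
  "(real \<times> real \<Rightarrow> real \<times> real) \<Rightarrow> (real \<times> real) set \<Rightarrow> (real \<times> real \<Rightarrow> real) \<Rightarrow> bool" where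
  "first_integral F U H \<longleftrightarrow>
     open U \<and> U \<noteq> {} \<and> H differentiable_on U \<and>
     (\<forall>V. open V \<and> V \<noteq> {} \<and> V \<subseteq> U \<longrightarrow> \<not> (\<exists>c. \<forall>z\<in>V. H z = c)) \<and>
     (\<forall>(\<gamma> :: real \<Rightarrow> real \<times> real) I.
        is_interval I \<and> (\<forall>t\<in>I. \<gamma> t \<in> U \<and> (\<gamma> has_vector_derivative F (\<gamma> t)) (at t within I))
        \<longrightarrow> (\<forall>s\<in>I. \<forall>t\<in>I. H (\<gamma> s) = H (\<gamma> t)))"

definition Hnum :: "nat \<Rightarrow> real poly \<Rightarrow> real \<Rightarrow> real \<Rightarrow> real" where
  "Hnum k r x y = (1 - (poly r x)^2)^(2*k) + 2 * real k * poly r x * (1 - (poly r x)^2)^k * y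
                  + real k * y^2"

definition Hden :: "nat \<Rightarrow> real poly \<Rightarrow> real \<Rightarrow> real \<Rightarrow> real" where
  "Hden k r x y = (1 - (poly r x)^2)^(2*k-1) + (2 * real k - 1) * poly r x * (1 - (poly r x)^2)^(k-1) * y
                  + (2 * real k - 1) / 2 * y^2"

end

(*
  Let N and D be the quadratics in y whose powers form H.  With r2 = r (1 - r^2)^(k-1) ((2k+1) r^2 - 3)
  and r4 as in lienard_r4, both are Darboux polynomials of the system with proportional cofactors:
  along every solution N' = 2k mu N and D' = (2k-1) mu D for one polynomial mu(x), and therefore
  (N^(2k-1) / D^(2k))' = 0.  On a vertical line H is a quotient of polynomials in y of degrees
  2(2k-1) and 4k, so it is not locally constant.
*)
theory Submission
  imports Defs
begin

lemma has_real_derivative_fst: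
  "(g has_vector_derivative v) F \<Longrightarrow> ((\<lambda>t. fst (g t)) has_real_derivative fst v) F"
  unfolding has_real_derivative_iff_has_vector_derivative
  by (rule bounded_linear.has_vector_derivative[OF bounded_linear_fst])

lemma has_real_derivative_snd:
  "(g has_vector_derivative v) F \<Longrightarrow> ((\<lambda>t. snd (g t)) has_real_derivative snd v) F"
  unfolding has_real_derivative_iff_has_vector_derivative
  by (rule bounded_linear.has_vector_derivative[OF bounded_linear_snd])

lemma DERIV_power_ratio_zero:
  fixes N D :: "real \<Rightarrow> real"
  assumes N: "(N has_real_derivative of_nat a * c * N t) (at t within I)"
    and D: "(D has_real_derivative of_nat b * c * D t) (at t within I)"
    and "D t \<noteq> 0"
  shows "((\<lambda>s. N s ^ b / D s ^ a) has_real_derivative 0) (at t within I)"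
proof -
  define E where "E = of_nat b * (of_nat a * c * N t * N t ^ (b - Suc 0)) * D t ^ a
    - of_nat a * (of_nat b * c * D t * D t ^ (a - Suc 0)) * N t ^ b"
  have "E = 0"
    unfolding E_def by (cases a; cases b) (simp_all add: algebra_simps)
  have "((\<lambda>s. N s ^ b / D s ^ a) has_real_derivative E / (D t ^ a) ^ Suc (Suc 0)) (at t within I)"
    unfolding E_def by (rule DERIV_quotient[OF DERIV_power[OF N] DERIV_power[OF D]]) (simp add: \<open>D t \<noteq> 0\<close>)
  with \<open>E = 0\<close> show ?thesis by simp
qed

text \<open>The three hypotheses compare the coefficients of \<open>1\<close>, \<open>y\<close> and \<open>y^2\<close> in the derivative of
  \<open>c0 + c1 y + c2 y^2\<close> along \<open>x' = -y + f x\<close>, \<open>y' = y g x\<close>.\<close>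

lemma quadratic_darboux_has_derivative:
  fixes c0 c1 f g m :: "real poly" and c2 :: real
  assumes c0: "pderiv c0 * f = m * c0"
    and c1: "pderiv c1 * f - pderiv c0 + c1 * g = m * c1"
    and c2: "smult (2 * c2) g - pderiv c1 = smult c2 m"
    and X: "(X has_real_derivative - Y t + poly f (X t)) (at t within I)"
    and Y: "(Y has_real_derivative Y t * poly g (X t)) (at t within I)"
  shows "((\<lambda>s. poly c0 (X s) + poly c1 (X s) * Y s + c2 * Y s ^ 2) has_real_derivative
           poly m (X t) * (poly c0 (X t) + poly c1 (X t) * Y t + c2 * Y t ^ 2)) (at t within I)"
proof -
  have "poly (pderiv c0 * f) (X t) = poly (m * c0) (X t)"
    "poly (pderiv c1 * f - pderiv c0 + c1 * g) (X t) = poly (m * c1) (X t)"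
    "poly (smult (2 * c2) g - pderiv c1) (X t) = poly (smult c2 m) (X t)"
    using c0 c1 c2 by simp_all
  then have eq: "poly (pderiv c0) (X t) * (- Y t + poly f (X t))
      + (poly (pderiv c1) (X t) * (- Y t + poly f (X t)) * Y t + poly c1 (X t) * (Y t * poly g (X t)))
      + c2 * (2 * Y t * (Y t * poly g (X t)))
      = poly m (X t) * (poly c0 (X t) + poly c1 (X t) * Y t + c2 * Y t ^ 2)"
    by (simp add: algebra_simps power2_eq_square) algebra
  have "((\<lambda>s. poly c0 (X s) + poly c1 (X s) * Y s + c2 * Y s ^ 2) has_real_derivative
      poly (pderiv c0) (X t) * (- Y t + poly f (X t))
      + (poly (pderiv c1) (X t) * (- Y t + poly f (X t)) * Y t + poly c1 (X t) * (Y t * poly g (X t)))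
      + c2 * (2 * Y t * (Y t * poly g (X t)))) (at t within I)"
    by (auto intro!: derivative_eq_intros X Y has_field_derivative_poly)
  with eq show ?thesis by simp
qed

lemma pderiv_power_times_base:
  "p * pderiv (p ^ n) = smult (of_nat n) (p ^ n * pderiv p)"
  by (cases n) (simp, simp only: pderiv_power_Suc, simp add: mult_ac)

lemma poly_nonzero_in_infinite_set:
  fixes p :: "'a::idom poly"
  assumes "p \<noteq> 0" "infinite S"
  shows "\<exists>x\<in>S. poly p x \<noteq> 0"
proof (rule ccontr)
  assume "\<not> ?thesis"
  then have "S \<subseteq> {x. poly p x = 0}" by auto
  then show False
    using assms poly_roots_finite finite_subset by blast
qed

lemma poly_ratio_not_constant_on_open:
  fixes P Q :: "real \<Rightarrow> real poly"
  assumes "\<And>x. P x \<noteq> 0" "\<And>x. degree (P x) \<noteq> degree (Q x)" "open V" "V \<noteq> {}"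
  shows "\<exists>(x, y)\<in>V. poly (P x) y \<noteq> c * poly (Q x) y"
proof -
  obtain x y0 where "(x, y0) \<in> V" using \<open>V \<noteq> {}\<close> by auto
  then obtain e where "e > 0" and ball: "ball (x, y0) e \<subseteq> V"
    using \<open>open V\<close> openE by blast
  have "P x - smult c (Q x) \<noteq> 0"
    using assms(1,2)[of x] by (metis degree_smult_eq eq_iff_diff_eq_0 smult_0_left)
  moreover have "infinite {y0 - e <..< y0 + e}"
    using \<open>e > 0\<close> by (simp add: infinite_Ioo)
  ultimately obtain y where y: "y \<in> {y0 - e <..< y0 + e}" "poly (P x - smult c (Q x)) y \<noteq> 0"
    using poly_nonzero_in_infinite_set by blast
  have "(x, y) \<in> V"
    using y(1) ball by (auto simp: dist_Pair_Pair dist_real_def abs_less_iff)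
  with y(2) show ?thesis by auto
qed

lemma differentiable_poly_fst:
  fixes p :: "real poly" and z :: "real \<times> 'a::real_normed_vector"
  shows "(\<lambda>z. poly p (fst z)) differentiable (at z within S)"
  by (rule differentiable_compose[of "poly p" fst])
    (simp_all add: bounded_linear_imp_differentiable bounded_linear_fst)

lemma first_integralI:
  assumes "open U" "U \<noteq> {}" "H differentiable_on U"
    and nonconstant: "\<And>V c. open V \<Longrightarrow> V \<noteq> {} \<Longrightarrow> V \<subseteq> U \<Longrightarrow> \<exists>z\<in>V. H z \<noteq> c"
    and along_solutions: "\<And>\<gamma> I t. t \<in> I \<Longrightarrow> \<gamma> t \<in> U \<Longrightarrow>
           (\<gamma> has_vector_derivative F (\<gamma> t)) (at t within I) \<Longrightarrow>
           ((\<lambda>s. H (\<gamma> s)) has_real_derivative 0) (at t within I)"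
  shows "first_integral F U H"
  unfolding first_integral_def
proof (intro conjI assms allI impI)
  fix V assume "open V \<and> V \<noteq> {} \<and> V \<subseteq> U"
  then show "\<not> (\<exists>c. \<forall>z\<in>V. H z = c)" using nonconstant by blast
next
  fix \<gamma> :: "real \<Rightarrow> real \<times> real" and I
  assume "is_interval I \<and> (\<forall>t\<in>I. \<gamma> t \<in> U \<and> (\<gamma> has_vector_derivative F (\<gamma> t)) (at t within I))"
  then obtain c where "\<forall>t\<in>I. H (\<gamma> t) = c"
    using has_field_derivative_zero_constant[OF is_interval_convex, of I "\<lambda>s. H (\<gamma> s)"] along_solutions
    by blast
  then show "\<forall>s\<in>I. \<forall>t\<in>I. H (\<gamma> s) = H (\<gamma> t)" by simp
qed

definition lienard_r2 :: "nat \<Rightarrow> real poly \<Rightarrow> real poly" where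
  "lienard_r2 k r = r * (1 - r^2)^(k-1) * (smult (2 * real k + 1) (r^2) - 3)"

text \<open>Here \<open>pderiv ((1 - r^2)^(k-1))\<close> stands for \<open>-2(k-1) r r' (1 - r^2)^(k-2)\<close>; writing it
  this way avoids the exponent \<open>k - 2\<close>, which is truncated to 0 when \<open>k = 1\<close>.\<close>

definition lienard_r4 :: "nat \<Rightarrow> real poly \<Rightarrow> real poly" where
  "lienard_r4 k r = pderiv r * (1 - r^2)^(k-1) * (1 - r^2 + smult (4 * (real k)^2) (r^2))
     + smult (2 * real k) (r * pderiv ((1 - r^2)^(k-1)))"

definition lienard_cofactor :: "nat \<Rightarrow> real poly \<Rightarrow> real poly" where
  "lienard_cofactor k r = smult 2 r *
     (smult (2 * real k + 1) (r * pderiv r * (1 - r^2)^(k-1)) + pderiv ((1 - r^2)^(k-1)))"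

lemma lienard_Hnum_darboux_conditions:
  fixes r :: "real poly"
  assumes "k \<ge> 1"
  defines "q \<equiv> 1 - r^2"
  defines "c0 \<equiv> q^(2*k)" and "c1 \<equiv> smult (2 * real k) (r * q^k)"
  defines "m \<equiv> smult (2 * real k) (lienard_cofactor k r)"
  shows "pderiv c0 * lienard_r2 k r = m * c0"
    and "pderiv c1 * lienard_r2 k r - pderiv c0 + c1 * lienard_r4 k r = m * c1"
    and "smult (2 * real k) (lienard_r4 k r) - pderiv c1 = smult (real k) m"
proof -
  define S where "S = q^(k-1)"
  obtain j where j: "k = Suc j" using \<open>k \<ge> 1\<close> by (cases k) auto
  have q_pow: "q^(2*k) = q^2 * S^2" "q^k = q * S"
    unfolding S_def j power_mult[symmetric] power_add[symmetric] by (simp_all add: algebra_simps)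
  have base: "q * pderiv S = smult (real k - 1) (S * pderiv q)"
    unfolding S_def pderiv_power_times_base using \<open>k \<ge> 1\<close> by (simp add: of_nat_diff)
  have dq: "pderiv q = - 2 * (r * pderiv r)"
    unfolding q_def by (simp add: pderiv_mult power2_eq_square pderiv_diff)
  have r2: "lienard_r2 k r = r * S * (smult (2 * real k + 1) (r^2) - 3)"
    and r4: "lienard_r4 k r = pderiv r * S * (q + smult (4 * (real k)^2) (r^2)) + smult (2 * real k) (r * pderiv S)"
    and mu: "lienard_cofactor k r = smult 2 r * (smult (2 * real k + 1) (r * pderiv r * S) + pderiv S)"
    unfolding lienard_r2_def lienard_r4_def lienard_cofactor_def S_def q_def by simp_all
  have pt: "poly q x * poly (pderiv S) x = (real k - 1) * (poly S x * (- 2 * poly r x * poly (pderiv r) x))"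
    and pq: "poly q x = 1 - poly r x ^ 2" for x
    using arg_cong[OF base, of "\<lambda>p. poly p x"] dq unfolding q_def by simp_all
  show "pderiv c0 * lienard_r2 k r = m * c0"
  proof (rule poly_ext)
    fix x show "poly (pderiv c0 * lienard_r2 k r) x = poly (m * c0) x"
      unfolding c0_def m_def q_pow r2 mu
      using pt[of x] pq[of x] by (simp add: pderiv_mult pderiv_smult dq power2_eq_square) algebra
  qed
  show "pderiv c1 * lienard_r2 k r - pderiv c0 + c1 * lienard_r4 k r = m * c1"
  proof (rule poly_ext)
    fix x show "poly (pderiv c1 * lienard_r2 k r - pderiv c0 + c1 * lienard_r4 k r) x = poly (m * c1) x"
      unfolding c0_def c1_def m_def q_pow r2 r4 mu
      using pt[of x] pq[of x] by (simp add: pderiv_mult pderiv_smult dq power2_eq_square) algebra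
  qed
  show "smult (2 * real k) (lienard_r4 k r) - pderiv c1 = smult (real k) m"
  proof (rule poly_ext)
    fix x show "poly (smult (2 * real k) (lienard_r4 k r) - pderiv c1) x = poly (smult (real k) m) x"
      unfolding c1_def m_def q_pow r4 mu
      using pt[of x] pq[of x] by (simp add: pderiv_mult pderiv_smult dq power2_eq_square) (simp add: algebra_simps)
  qed
qed

lemma lienard_Hden_darboux_conditions:
  fixes r :: "real poly"
  assumes "k \<ge> 1"
  defines "q \<equiv> 1 - r^2"
  defines "c0 \<equiv> q^(2*k-1)" and "c1 \<equiv> smult (2 * real k - 1) (r * q^(k-1))"
  defines "m \<equiv> smult (2 * real k - 1) (lienard_cofactor k r)"
  shows "pderiv c0 * lienard_r2 k r = m * c0"
    and "pderiv c1 * lienard_r2 k r - pderiv c0 + c1 * lienard_r4 k r = m * c1"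
    and "smult (2 * ((2 * real k - 1) / 2)) (lienard_r4 k r) - pderiv c1 = smult ((2 * real k - 1) / 2) m"
proof -
  define S where "S = q^(k-1)"
  obtain j where j: "k = Suc j" using \<open>k \<ge> 1\<close> by (cases k) auto
  have q_pow: "q^(2*k-1) = q * S^2"
    unfolding S_def j power_mult[symmetric] power_Suc[symmetric] by (simp add: algebra_simps)
  have base: "q * pderiv S = smult (real k - 1) (S * pderiv q)"
    unfolding S_def pderiv_power_times_base using \<open>k \<ge> 1\<close> by (simp add: of_nat_diff)
  have dq: "pderiv q = - 2 * (r * pderiv r)"
    unfolding q_def by (simp add: pderiv_mult power2_eq_square pderiv_diff)
  have r2: "lienard_r2 k r = r * S * (smult (2 * real k + 1) (r^2) - 3)"
    and r4: "lienard_r4 k r = pderiv r * S * (q + smult (4 * (real k)^2) (r^2)) + smult (2 * real k) (r * pderiv S)"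
    and mu: "lienard_cofactor k r = smult 2 r * (smult (2 * real k + 1) (r * pderiv r * S) + pderiv S)"
    unfolding lienard_r2_def lienard_r4_def lienard_cofactor_def S_def q_def by simp_all
  have pt: "poly q x * poly (pderiv S) x = (real k - 1) * (poly S x * (- 2 * poly r x * poly (pderiv r) x))"
    and pq: "poly q x = 1 - poly r x ^ 2" for x
    using arg_cong[OF base, of "\<lambda>p. poly p x"] dq unfolding q_def by simp_all
  show "pderiv c0 * lienard_r2 k r = m * c0"
  proof (rule poly_ext)
    fix x show "poly (pderiv c0 * lienard_r2 k r) x = poly (m * c0) x"
      unfolding c0_def m_def q_pow r2 mu
      using pt[of x] pq[of x] by (simp add: pderiv_mult pderiv_smult dq power2_eq_square) algebra
  qed
  show "pderiv c1 * lienard_r2 k r - pderiv c0 + c1 * lienard_r4 k r = m * c1"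
  proof (rule poly_ext)
    fix x show "poly (pderiv c1 * lienard_r2 k r - pderiv c0 + c1 * lienard_r4 k r) x = poly (m * c1) x"
      unfolding c0_def c1_def m_def q_pow S_def[symmetric] r2 r4 mu
      using pt[of x] pq[of x] by (simp add: pderiv_mult pderiv_smult dq power2_eq_square) algebra
  qed
  show "smult (2 * ((2 * real k - 1) / 2)) (lienard_r4 k r) - pderiv c1 = smult ((2 * real k - 1) / 2) m"
  proof (rule poly_ext)
    fix x show "poly (smult (2 * ((2 * real k - 1) / 2)) (lienard_r4 k r) - pderiv c1) x = poly (smult ((2 * real k - 1) / 2) m) x"
      unfolding c1_def m_def S_def[symmetric] r4 mu
      using pt[of x] pq[of x] by (simp add: pderiv_mult pderiv_smult dq power2_eq_square) (simp add: algebra_simps)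
  qed
qed

lemma Hnum_along_lienard_solution:
  fixes r :: "real poly" and X Y :: "real \<Rightarrow> real"
  assumes "k \<ge> 1"
    and X: "(X has_real_derivative - Y t + poly (lienard_r2 k r) (X t)) (at t within I)"
    and Y: "(Y has_real_derivative Y t * poly (lienard_r4 k r) (X t)) (at t within I)"
  shows "((\<lambda>s. Hnum k r (X s) (Y s)) has_real_derivative
           of_nat (2*k) * poly (lienard_cofactor k r) (X t) * Hnum k r (X t) (Y t)) (at t within I)"
proof -
  have "Hnum k r x y = poly ((1 - r^2)^(2*k)) x + poly (smult (2 * real k) (r * (1 - r^2)^k)) x * y + real k * y^2"
    for x y unfolding Hnum_def by (simp add: poly_power)
  then show ?thesis
    using quadratic_darboux_has_derivative[OF lienard_Hnum_darboux_conditions[OF \<open>k \<ge> 1\<close>] X Y]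
    by (simp add: mult_ac)
qed

lemma Hden_along_lienard_solution:
  fixes r :: "real poly" and X Y :: "real \<Rightarrow> real"
  assumes "k \<ge> 1"
    and X: "(X has_real_derivative - Y t + poly (lienard_r2 k r) (X t)) (at t within I)"
    and Y: "(Y has_real_derivative Y t * poly (lienard_r4 k r) (X t)) (at t within I)"
  shows "((\<lambda>s. Hden k r (X s) (Y s)) has_real_derivative
           of_nat (2*k-1) * poly (lienard_cofactor k r) (X t) * Hden k r (X t) (Y t)) (at t within I)"
proof -
  have "Hden k r x y = poly ((1 - r^2)^(2*k-1)) x + poly (smult (2 * real k - 1) (r * (1 - r^2)^(k-1))) x * y
      + (2 * real k - 1) / 2 * y^2"
    for x y unfolding Hden_def by (simp add: poly_power)
  then show ?thesis
    using quadratic_darboux_has_derivative[OF lienard_Hden_darboux_conditions[OF \<open>k \<ge> 1\<close>] X Y] \<open>k \<ge> 1\<close>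
    by (simp add: mult_ac of_nat_diff)
qed

lemma lienard_H_along_solution:
  fixes r :: "real poly" and \<gamma> :: "real \<Rightarrow> real \<times> real"
  assumes "k \<ge> 1"
    and \<gamma>: "(\<gamma> has_vector_derivative
             (\<lambda>(x, y). (- y + poly (lienard_r2 k r) x, y * poly (lienard_r4 k r) x)) (\<gamma> t)) (at t within I)"
    and "\<gamma> t \<in> {(x, y). Hden k r x y \<noteq> 0}"
  shows "((\<lambda>s. (\<lambda>(x, y). Hnum k r x y ^ (2*k-1) / Hden k r x y ^ (2*k)) (\<gamma> s)) has_real_derivative 0)
           (at t within I)"
proof -
  have X: "((\<lambda>s. fst (\<gamma> s)) has_real_derivative - snd (\<gamma> t) + poly (lienard_r2 k r) (fst (\<gamma> t))) (at t within I)"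
    and Y: "((\<lambda>s. snd (\<gamma> s)) has_real_derivative snd (\<gamma> t) * poly (lienard_r4 k r) (fst (\<gamma> t))) (at t within I)"
    using has_real_derivative_fst[OF \<gamma>] has_real_derivative_snd[OF \<gamma>] by (simp_all add: case_prod_unfold)
  from DERIV_power_ratio_zero[OF Hnum_along_lienard_solution[OF \<open>k \<ge> 1\<close> X Y]
      Hden_along_lienard_solution[OF \<open>k \<ge> 1\<close> X Y]] \<open>\<gamma> t \<in> _\<close>
  show ?thesis by (simp add: case_prod_unfold)
qed

definition Hnum_poly :: "nat \<Rightarrow> real poly \<Rightarrow> real \<Rightarrow> real poly" where
  "Hnum_poly k r x = [:(1 - poly r x ^ 2)^(2*k), 2 * real k * poly r x * (1 - poly r x ^ 2)^k, real k:]"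

definition Hden_poly :: "nat \<Rightarrow> real poly \<Rightarrow> real \<Rightarrow> real poly" where
  "Hden_poly k r x = [:(1 - poly r x ^ 2)^(2*k-1), (2 * real k - 1) * poly r x * (1 - poly r x ^ 2)^(k-1),
                      (2 * real k - 1) / 2:]"

lemma poly_Hnum_poly: "poly (Hnum_poly k r x) y = Hnum k r x y"
  unfolding Hnum_poly_def Hnum_def by (simp add: algebra_simps power2_eq_square)

lemma poly_Hden_poly: "poly (Hden_poly k r x) y = Hden k r x y"
  unfolding Hden_poly_def Hden_def by (simp add: algebra_simps power2_eq_square)

lemma degree_Hnum_poly: "k \<ge> 1 \<Longrightarrow> degree (Hnum_poly k r x) = 2"
  unfolding Hnum_poly_def by simp

lemma degree_Hden_poly: "k \<ge> 1 \<Longrightarrow> degree (Hden_poly k r x) = 2"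
  unfolding Hden_poly_def by simp

lemma Hden_nonzero_somewhere:
  assumes "k \<ge> 1"
  shows "\<exists>y. Hden k r x y \<noteq> 0"
proof -
  have "Hden_poly k r x \<noteq> 0"
    using degree_Hden_poly[OF assms, of r x] by auto
  then show ?thesis
    using poly_nonzero_in_infinite_set[OF _ infinite_UNIV_char_0] by (metis poly_Hden_poly)
qed

lemma lienard_H_not_constant_on_open:
  assumes "k \<ge> 1" "open V" "V \<noteq> {}" "V \<subseteq> {(x, y). Hden k r x y \<noteq> 0}"
  shows "\<exists>z\<in>V. (\<lambda>(x, y). Hnum k r x y ^ (2*k-1) / Hden k r x y ^ (2*k)) z \<noteq> c"
proof -
  have "Hnum_poly k r x \<noteq> 0" "Hden_poly k r x \<noteq> 0" for x
    using degree_Hnum_poly[OF \<open>k \<ge> 1\<close>, of r x] degree_Hden_poly[OF \<open>k \<ge> 1\<close>, of r x] by auto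
  then have "Hnum_poly k r x ^ (2*k-1) \<noteq> 0"
    and "degree (Hnum_poly k r x ^ (2*k-1)) \<noteq> degree (Hden_poly k r x ^ (2*k))" for x
    using \<open>k \<ge> 1\<close> by (simp_all add: degree_power_eq degree_Hnum_poly degree_Hden_poly)
  from poly_ratio_not_constant_on_open[of "\<lambda>x. Hnum_poly k r x ^ (2*k-1)" "\<lambda>x. Hden_poly k r x ^ (2*k)",
      OF this \<open>open V\<close> \<open>V \<noteq> {}\<close>]
  obtain x y where "(x, y) \<in> V"
      and "poly (Hnum_poly k r x ^ (2*k-1)) y \<noteq> c * poly (Hden_poly k r x ^ (2*k)) y"
    by blast
  moreover from this(1) have "Hden k r x y \<noteq> 0"
    using \<open>V \<subseteq> _\<close> by auto
  ultimately have "Hnum k r x y ^ (2*k-1) / Hden k r x y ^ (2*k) \<noteq> c"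
    by (simp add: poly_power poly_Hnum_poly poly_Hden_poly field_simps)
  with \<open>(x, y) \<in> V\<close> show ?thesis by (intro bexI[of _ "(x, y)"]) auto
qed

theorem mainTheorem8:
  fixes k :: nat and r :: "real poly"
  assumes "k \<ge> 1"
  shows "\<exists>r2 r4 :: real poly.
           first_integral (\<lambda>(x, y). (- y + poly r2 x, y * poly r4 x))
             {(x, y). Hden k r x y \<noteq> 0}
             (\<lambda>(x, y). (Hnum k r x y) ^ (2*k - 1) / (Hden k r x y) ^ (2*k))"
proof (rule exI[of _ "lienard_r2 k r"], rule exI[of _ "lienard_r4 k r"], rule first_integralI)
  show "open {(x, y). Hden k r x y \<noteq> 0}"
    unfolding case_prod_unfold Hden_def by (intro open_Collect_neq continuous_intros)
  show "{(x, y). Hden k r x y \<noteq> 0} \<noteq> {}"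
    using Hden_nonzero_somewhere[OF \<open>k \<ge> 1\<close>] by auto
  show "(\<lambda>(x, y). Hnum k r x y ^ (2*k-1) / Hden k r x y ^ (2*k)) differentiable_on {(x, y). Hden k r x y \<noteq> 0}"
    unfolding differentiable_on_def case_prod_unfold Hnum_def Hden_def
    by (auto intro!: differentiable_divide differentiable_power differentiable_add differentiable_mult
        differentiable_diff differentiable_const differentiable_poly_fst
        bounded_linear_imp_differentiable[OF bounded_linear_snd])
  show "\<exists>z\<in>V. (\<lambda>(x, y). Hnum k r x y ^ (2*k-1) / Hden k r x y ^ (2*k)) z \<noteq> c"
    if "open V" "V \<noteq> {}" "V \<subseteq> {(x, y). Hden k r x y \<noteq> 0}" for V c
    using lienard_H_not_constant_on_open[OF \<open>k \<ge> 1\<close> that] .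
qed (rule lienard_H_along_solution[OF \<open>k \<ge> 1\<close>])

end
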